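(* Let $W^\pm=(\alpha_1^\pm,\rho_1^\pm,\rho_2^\pm,u_1^\pm,u_2^\pm)$ with $\alpha_1^\pm\in(0,1)$, $\rho_i^\pm>0$, and $S\in\mathbb{R}$ satisfy the Rankine–Hugoniot conditions \begin{align*} &[\![\alpha_1\rho u]\!]=S[\![\alpha_1\rho]\!],\quad [\![\alpha_1\rho_1u_1]\!]=S[\![\alpha_1\rho_1]\!],\quad [\![\rho u]\!]=S[\![\rho]\!],\\ &[\![\alpha_1\rho_1u_1^2+\alpha_2\rho_2u_2^2+\alpha_1p_1+\alpha_2p_2]\!]=S[\![\alpha_1\rho_1u_1+\alpha_2\rho_2u_2]\!],\quad [\![\tfrac12(u_1^2-u_2^2)+\Psi_1-\Psi_2]\!]=S[\![u_1-u_2]\!], \end{align*} and assume $Q:=-\rho^-(u^--S)<0$. Let $\nu\in\{1,2\}$, assume $\rho\mapsto\rho\,a_\nu(\rho)$ is strictly increasing on $(0,\infty)$, and assume $\rho_\nu^-<\rho_\nu^+$. Let $D$ be the energy dissipation \[ D=\sum_{i=1}^2\Big(-S\,[\![\alpha_i\rho_i(\varphi_i+\tfrac12u_i^2)]\!]+[\![\alpha_i\rho_iu_i(\Psi_i+\tfrac12u_i^2)]\!]\Big). \] (a) If $S=u_\nu^+-a_\nu(\rho_\nu^+)$ (the characteristic speed $u_\nu-a_\nu$ on the right coincides with the discontinuity), then $D<0$, i.e. the energy admissibility condition $D\le0$ holds. (b) If $S=u_\nu^--a_\nu(\rho_\nu^-)$ (the characteristic speed $u_\nu-a_\nu$ on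 the left coincides with the discontinuity), then $D>0$, i.e. the energy admissibility condition is violated.
   Context: For $i=1,2$, $p_i:(0,\infty)\to\mathbb{R}$ is smooth with $p_i'>0$, $a_i(\rho)=\sqrt{p_i'(\rho)}$; $\varphi_i$ is an antiderivative of $\rho\mapsto p_i(\rho)/\rho^2$ and $\Psi_i(\rho)=\varphi_i(\rho)+p_i(\rho)/\rho$. For a state: $\alpha_2=1-\alpha_1$, $\rho=\alpha_1\rho_1+\alpha_2\rho_2$, $c_i=\alpha_i\rho_i/\rho$, $u=c_1u_1+c_2u_2$, $p_i=p_i(\rho_i)$, $\varphi_i=\varphi_i(\rho_i)$, $\Psi_i=\Psi_i(\rho_i)$. $[\![f]\!]=f(W^+)-f(W^-)$. This concerns a shock of one phase lying inside a rarefaction fan of phase $\nu$ of the one-dimensional barotropic conservative SHTC two-phase system, the admissibility criterion being $D\le0$. *)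

theory Defs
  imports "HOL-Analysis.Analysis"
begin

type_synonym state = "real \<times> real \<times> real \<times> real \<times> real"

definition smooth_on :: "real set \<Rightarrow> (real \<Rightarrow> real) \<Rightarrow> bool" where
  "smooth_on A f \<longleftrightarrow> (\<forall>k x. x \<in> A \<longrightarrow> ((deriv ^^ k) f) differentiable (at x))"

definition alph :: "state \<Rightarrow> nat \<Rightarrow> real" where
  "alph W i = (case W of (a1, r1, r2, v1, v2) \<Rightarrow> if i = 1 then a1 else 1 - a1)"

definition rh :: "state \<Rightarrow> nat \<Rightarrow> real" where
  "rh W i = (case W of (a1, r1, r2, v1, v2) \<Rightarrow> if i = 1 then r1 else r2)"

definition vel :: "state \<Rightarrow> nat \<Rightarrow> real" where
  "vel W i = (case W of (a1, r1, r2, v1, v2) \<Rightarrow> if i = 1 then v1 else v2)"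

definition rho :: "state \<Rightarrow> real" where
  "rho W = alph W 1 * rh W 1 + alph W 2 * rh W 2"

definition cfrac :: "state \<Rightarrow> nat \<Rightarrow> real" where
  "cfrac W i = alph W i * rh W i / rho W"

definition umix :: "state \<Rightarrow> real" where
  "umix W = cfrac W 1 * vel W 1 + cfrac W 2 * vel W 2"

definition sound :: "(nat \<Rightarrow> real \<Rightarrow> real) \<Rightarrow> nat \<Rightarrow> real \<Rightarrow> real" where
  "sound p i r = sqrt (deriv (p i) r)"

definition Psi :: "(nat \<Rightarrow> real \<Rightarrow> real) \<Rightarrow> (nat \<Rightarrow> real \<Rightarrow> real) \<Rightarrow> nat \<Rightarrow> real \<Rightarrow> real" where
  "Psi p \<phi> i r = \<phi> i r + p i r / r"

definition jump :: "(state \<Rightarrow> real) \<Rightarrow> state \<Rightarrow> state \<Rightarrow> real" where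
  "jump f Wm Wp = f Wp - f Wm"

definition dissip :: "(nat \<Rightarrow> real \<Rightarrow> real) \<Rightarrow> (nat \<Rightarrow> real \<Rightarrow> real) \<Rightarrow> real \<Rightarrow> state \<Rightarrow> state \<Rightarrow> real" where
  "dissip p \<phi> S Wm Wp = (\<Sum>i\<in>{1,2::nat}.
      - S * jump (\<lambda>W. alph W i * rh W i * (\<phi> i (rh W i) + vel W i ^ 2 / 2)) Wm Wp
      + jump (\<lambda>W. alph W i * rh W i * vel W i * (Psi p \<phi> i (rh W i) + vel W i ^ 2 / 2)) Wm Wp)"

end

(*
  The Rankine-Hugoniot conditions force the volume fraction and both phase mass fluxes
  m_i = alpha_i rho_i (u_i - S) to be continuous across the discontinuity.  Splitting u_i = (u_i - S) + S
  in the energy fluxes and using momentum conservation then gives D = sum_i m_i [[B_i]] with the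
  relative Bernoulli quantity B_i = (u_i - S)^2/2 + Psi_i(rho_i), and the last Rankine-Hugoniot
  condition says [[B_1]] = [[B_2]], so D = -Q [[B_nu]].  With j = rho_nu (u_nu - S), which is the same on
  both sides, B_nu = Psi_nu(rho_nu) + j^2/(2 rho_nu^2), a function of rho_nu whose derivative has the
  sign of (rho a_nu(rho))^2 - j^2.  In case (a) j = rho_nu^+ a_nu(rho_nu^+), so it decreases on
  [rho_nu^-, rho_nu^+]; in case (b) j = rho_nu^- a_nu(rho_nu^-) and it increases.
*)
theory Submission
  imports Defs
begin

lemma has_real_derivative_if_smooth_on:
  assumes "smooth_on A f" "x \<in> A"
  shows "(f has_real_derivative deriv f x) (at x)"
proof -
  have "f differentiable (at x)"
    using assms unfolding smooth_on_def by (metis funpow_0)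
  then show ?thesis
    by (simp add: DERIV_deriv_iff_real_differentiable)
qed

lemma has_real_derivative_relative_bernoulli:
  fixes P F :: "real \<Rightarrow> real"
  assumes dP: "(P has_real_derivative P' r) (at r)"
    and dF: "(F has_real_derivative P r / r\<^sup>2) (at r)"
    and r: "r > 0"
  shows "((\<lambda>r. F r + P r / r + K / (2 * r\<^sup>2)) has_real_derivative (r\<^sup>2 * P' r - K) / r ^ 3) (at r)"
proof -
  have "((\<lambda>r. F r + P r / r + K / (2 * r\<^sup>2)) has_real_derivative
          P r / r\<^sup>2 + (P' r * r - P r) / r\<^sup>2 - K * (4 * r) / (2 * r\<^sup>2)\<^sup>2) (at r)"
    using r by (auto intro!: derivative_eq_intros dP dF simp: power2_eq_square)
  moreover have "P r / r\<^sup>2 + (P' r * r - P r) / r\<^sup>2 - K * (4 * r) / (2 * r\<^sup>2)\<^sup>2 = (r\<^sup>2 * P' r - K) / r ^ 3"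
    using r by (simp add: field_simps power2_eq_square power3_eq_cube)
  ultimately show ?thesis by simp
qed

lemma continuous_on_relative_bernoulli:
  fixes P F :: "real \<Rightarrow> real"
  assumes dP: "\<And>r. r > 0 \<Longrightarrow> (P has_real_derivative P' r) (at r)"
    and dF: "\<And>r. r > 0 \<Longrightarrow> (F has_real_derivative P r / r\<^sup>2) (at r)"
    and a: "a > 0"
  shows "continuous_on {a..b} (\<lambda>r. F r + P r / r + K / (2 * r\<^sup>2))"
proof (intro DERIV_atLeastAtMost_imp_continuous_on exI)
  fix r assume "a \<le> r"
  with a have "r > 0" by linarith
  then show "((\<lambda>r. F r + P r / r + K / (2 * r\<^sup>2)) has_real_derivative (r\<^sup>2 * P' r - K) / r ^ 3) (at r)"
    by (intro has_real_derivative_relative_bernoulli dP dF)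
qed

lemma relative_bernoulli_strict_decreasing:
  fixes P F :: "real \<Rightarrow> real"
  assumes dP: "\<And>r. r > 0 \<Longrightarrow> (P has_real_derivative P' r) (at r)"
    and dF: "\<And>r. r > 0 \<Longrightarrow> (F has_real_derivative P r / r\<^sup>2) (at r)"
    and mono: "strict_mono_on {0<..} (\<lambda>r. r\<^sup>2 * P' r)"
    and r: "0 < r0" "r0 < r1" and K: "r1\<^sup>2 * P' r1 \<le> K"
  shows "F r1 + P r1 / r1 + K / (2 * r1\<^sup>2) < F r0 + P r0 / r0 + K / (2 * r0\<^sup>2)"
proof (rule DERIV_neg_imp_decreasing_open[OF r(2)])
  fix z assume z: "r0 < z" "z < r1"
  have "z\<^sup>2 * P' z < r1\<^sup>2 * P' r1"
    using mono z r by (auto simp: strict_mono_on_def)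
  with K have "z\<^sup>2 * P' z < K" by linarith
  then show "\<exists>y. ((\<lambda>r. F r + P r / r + K / (2 * r\<^sup>2)) has_real_derivative y) (at z) \<and> y < 0"
    using z r by (intro exI[of _ "(z\<^sup>2 * P' z - K) / z ^ 3"] conjI
        has_real_derivative_relative_bernoulli dP dF) (auto simp: divide_neg_pos)
next
  show "continuous_on {r0..r1} (\<lambda>r. F r + P r / r + K / (2 * r\<^sup>2))"
    by (rule continuous_on_relative_bernoulli[OF dP dF r(1)])
qed

lemma relative_bernoulli_strict_increasing:
  fixes P F :: "real \<Rightarrow> real"
  assumes dP: "\<And>r. r > 0 \<Longrightarrow> (P has_real_derivative P' r) (at r)"
    and dF: "\<And>r. r > 0 \<Longrightarrow> (F has_real_derivative P r / r\<^sup>2) (at r)"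
    and mono: "strict_mono_on {0<..} (\<lambda>r. r\<^sup>2 * P' r)"
    and r: "0 < r0" "r0 < r1" and K: "K \<le> r0\<^sup>2 * P' r0"
  shows "F r0 + P r0 / r0 + K / (2 * r0\<^sup>2) < F r1 + P r1 / r1 + K / (2 * r1\<^sup>2)"
proof (rule DERIV_pos_imp_increasing_open[OF r(2)])
  fix z assume z: "r0 < z" "z < r1"
  have "r0\<^sup>2 * P' r0 < z\<^sup>2 * P' z"
    using mono z r by (auto simp: strict_mono_on_def)
  with K have "K < z\<^sup>2 * P' z" by linarith
  then show "\<exists>y. ((\<lambda>r. F r + P r / r + K / (2 * r\<^sup>2)) has_real_derivative y) (at z) \<and> y > 0"
    using z r by (intro exI[of _ "(z\<^sup>2 * P' z - K) / z ^ 3"] conjI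
        has_real_derivative_relative_bernoulli dP dF) auto
next
  show "continuous_on {r0..r1} (\<lambda>r. F r + P r / r + K / (2 * r\<^sup>2))"
    by (rule continuous_on_relative_bernoulli[OF dP dF r(1)])
qed

lemma strict_mono_on_power2_mul_deriv:
  assumes mono: "strict_mono_on {0<..} (\<lambda>r. r * sound p i r)"
    and p': "\<And>r. r > 0 \<Longrightarrow> deriv (p i) r > 0"
  shows "strict_mono_on {0<..} (\<lambda>r. r\<^sup>2 * deriv (p i) r)"
proof (rule strict_mono_onI)
  fix r s :: real
  assume rs: "r \<in> {0<..}" "s \<in> {0<..}" "r < s"
  then have "r * sound p i r < s * sound p i s"
    using strict_mono_onD[OF mono] by blast
  moreover have "0 \<le> r * sound p i r"
    using rs p'[of r] by (simp add: sound_def)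
  ultimately have "(r * sound p i r)\<^sup>2 < (s * sound p i s)\<^sup>2"
    by (rule power_strict_mono) simp
  then show "r\<^sup>2 * deriv (p i) r < s\<^sup>2 * deriv (p i) s"
    using rs p'[of r] p'[of s] by (simp add: sound_def power_mult_distrib)
qed

definition mass_flux :: "real \<Rightarrow> state \<Rightarrow> nat \<Rightarrow> real" where
  "mass_flux S W i = alph W i * rh W i * (vel W i - S)"

definition bernoulli :: "(nat \<Rightarrow> real \<Rightarrow> real) \<Rightarrow> (nat \<Rightarrow> real \<Rightarrow> real) \<Rightarrow> real \<Rightarrow> state \<Rightarrow> nat \<Rightarrow> real" where
  "bernoulli p \<phi> S W i = (vel W i - S)\<^sup>2 / 2 + Psi p \<phi> i (rh W i)"

lemma alph_2: "alph W 2 = 1 - alph W 1"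
  by (simp add: alph_def split: prod.splits)

lemma rho_pos:
  assumes "0 < alph W 1" "alph W 1 < 1" "rh W 1 > 0" "rh W 2 > 0"
  shows "rho W > 0"
  using assms by (simp add: rho_def alph_2 add_pos_pos)

lemma mixture_flux_eq_sum_mass_flux:
  assumes "rho W \<noteq> 0"
  shows "rho W * (umix W - S) = mass_flux S W 1 + mass_flux S W 2"
proof -
  have "rho W * umix W = alph W 1 * rh W 1 * vel W 1 + alph W 2 * rh W 2 * vel W 2"
    using assms by (simp add: umix_def cfrac_def field_simps)
  then show ?thesis
    by (simp add: mass_flux_def rho_def algebra_simps)
qed

lemma alph_eq_if_mixture_flux_nonzero:
  assumes RH1: "jump (\<lambda>W. alph W 1 * rho W * umix W) Wm Wp = S * jump (\<lambda>W. alph W 1 * rho W) Wm Wp"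
    and RH3: "jump (\<lambda>W. rho W * umix W) Wm Wp = S * jump rho Wm Wp"
    and M: "rho Wm * (umix Wm - S) \<noteq> 0"
    and i: "i \<in> {1, 2}"
  shows "alph Wp i = alph Wm i"
proof -
  have "rho Wp * (umix Wp - S) = rho Wm * (umix Wm - S)"
    using RH3 by (simp add: jump_def algebra_simps)
  moreover have "alph Wp 1 * (rho Wp * (umix Wp - S)) = alph Wm 1 * (rho Wm * (umix Wm - S))"
    using RH1 by (simp add: jump_def algebra_simps)
  ultimately have "alph Wp 1 = alph Wm 1"
    using M by simp
  then show ?thesis
    using i by (auto simp: alph_2)
qed

lemma mass_flux_eq_across_shock:
  assumes RH2: "jump (\<lambda>W. alph W 1 * rh W 1 * vel W 1) Wm Wp = S * jump (\<lambda>W. alph W 1 * rh W 1) Wm Wp"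
    and RH3: "jump (\<lambda>W. rho W * umix W) Wm Wp = S * jump rho Wm Wp"
    and rho: "rho Wm \<noteq> 0" "rho Wp \<noteq> 0"
    and i: "i \<in> {1, 2}"
  shows "mass_flux S Wp i = mass_flux S Wm i"
proof -
  have flux1: "mass_flux S Wp 1 = mass_flux S Wm 1"
    using RH2 by (simp add: jump_def mass_flux_def algebra_simps)
  have "rho Wp * (umix Wp - S) = rho Wm * (umix Wm - S)"
    using RH3 by (simp add: jump_def algebra_simps)
  then have flux2: "mass_flux S Wp 2 = mass_flux S Wm 2"
    using flux1 by (simp add: mixture_flux_eq_sum_mass_flux rho)
  show ?thesis
    using i flux1 flux2 by auto
qed

lemma phase_flux_eq_across_shock:
  assumes RH1: "jump (\<lambda>W. alph W 1 * rho W * umix W) Wm Wp = S * jump (\<lambda>W. alph W 1 * rho W) Wm Wp"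
    and RH2: "jump (\<lambda>W. alph W 1 * rh W 1 * vel W 1) Wm Wp = S * jump (\<lambda>W. alph W 1 * rh W 1) Wm Wp"
    and RH3: "jump (\<lambda>W. rho W * umix W) Wm Wp = S * jump rho Wm Wp"
    and rho: "rho Wm \<noteq> 0" "rho Wp \<noteq> 0"
    and M: "rho Wm * (umix Wm - S) \<noteq> 0"
    and alph: "alph Wm i \<noteq> 0"
    and i: "i \<in> {1, 2}"
  shows "rh Wm i * (vel Wm i - S) = rh Wp i * (vel Wp i - S)"
  using mass_flux_eq_across_shock[OF RH2 RH3 rho i] alph_eq_if_mixture_flux_nonzero[OF RH1 RH3 M i] alph
  by (simp add: mass_flux_def)

lemma energy_flux_decomposition:
  assumes "rh W i \<noteq> 0"
  shows "- S * (alph W i * rh W i * (\<phi> i (rh W i) + vel W i ^ 2 / 2))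
           + alph W i * rh W i * vel W i * (Psi p \<phi> i (rh W i) + vel W i ^ 2 / 2)
         = mass_flux S W i * bernoulli p \<phi> S W i
           + S * (mass_flux S W i * vel W i + alph W i * p i (rh W i)) - S\<^sup>2 / 2 * mass_flux S W i"
  using assms by (simp add: mass_flux_def bernoulli_def Psi_def field_simps power2_eq_square)

lemma dissip_eq_mass_flux_bernoulli:
  assumes rh: "\<And>i. i \<in> {1, 2} \<Longrightarrow> rh Wm i \<noteq> 0 \<and> rh Wp i \<noteq> 0"
    and flux: "\<And>i. i \<in> {1, 2} \<Longrightarrow> mass_flux S Wp i = mass_flux S Wm i"
    and RH4: "jump (\<lambda>W. alph W 1 * rh W 1 * vel W 1 ^ 2 + alph W 2 * rh W 2 * vel W 2 ^ 2
                        + alph W 1 * p 1 (rh W 1) + alph W 2 * p 2 (rh W 2)) Wm Wp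
              = S * jump (\<lambda>W. alph W 1 * rh W 1 * vel W 1 + alph W 2 * rh W 2 * vel W 2) Wm Wp"
  shows "dissip p \<phi> S Wm Wp = (\<Sum>i\<in>{1,2}. mass_flux S Wm i * jump (\<lambda>W. bernoulli p \<phi> S W i) Wm Wp)"
proof -
  \<comment> \<open>Summed over the phases, the jumps of G cancel by the momentum condition RH4.\<close>
  define G where "G W i = mass_flux S W i * vel W i + alph W i * p i (rh W i)" for W i
  have summand: "- S * jump (\<lambda>W. alph W i * rh W i * (\<phi> i (rh W i) + vel W i ^ 2 / 2)) Wm Wp
      + jump (\<lambda>W. alph W i * rh W i * vel W i * (Psi p \<phi> i (rh W i) + vel W i ^ 2 / 2)) Wm Wp
    = mass_flux S Wm i * jump (\<lambda>W. bernoulli p \<phi> S W i) Wm Wp + S * jump (\<lambda>W. G W i) Wm Wp"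
    if "i \<in> {1, 2}" for i
    using energy_flux_decomposition[of Wm i S \<phi> p] energy_flux_decomposition[of Wp i S \<phi> p]
      rh[OF that] flux[OF that]
    by (simp add: jump_def G_def algebra_simps)
  have "jump (\<lambda>W. G W 1) Wm Wp + jump (\<lambda>W. G W 2) Wm Wp = 0"
    using RH4 by (simp add: G_def jump_def mass_flux_def algebra_simps power2_eq_square)
  then have momentum_terms: "S * jump (\<lambda>W. G W 1) Wm Wp + S * jump (\<lambda>W. G W 2) Wm Wp = 0"
    by (metis distrib_left mult_zero_right)
  have "dissip p \<phi> S Wm Wp
      = (\<Sum>i\<in>{1,2}. mass_flux S Wm i * jump (\<lambda>W. bernoulli p \<phi> S W i) Wm Wp + S * jump (\<lambda>W. G W i) Wm Wp)"
    unfolding dissip_def by (rule sum.cong) (simp_all only: summand)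
  with momentum_terms show ?thesis
    by simp
qed

lemma bernoulli_jump_eq_across_phases:
  assumes RH5: "jump (\<lambda>W. (vel W 1 ^ 2 - vel W 2 ^ 2) / 2 + Psi p \<phi> 1 (rh W 1) - Psi p \<phi> 2 (rh W 2)) Wm Wp
              = S * jump (\<lambda>W. vel W 1 - vel W 2) Wm Wp"
  shows "jump (\<lambda>W. bernoulli p \<phi> S W 1) Wm Wp = jump (\<lambda>W. bernoulli p \<phi> S W 2) Wm Wp"
  using RH5 by (simp add: jump_def bernoulli_def power2_eq_square field_simps)

lemma dissip_eq_mixture_flux_mul_bernoulli_jump:
  assumes rh: "\<And>i. i \<in> {1, 2} \<Longrightarrow> rh Wm i \<noteq> 0 \<and> rh Wp i \<noteq> 0"
    and rho: "rho Wm \<noteq> 0" "rho Wp \<noteq> 0"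
    and RH2: "jump (\<lambda>W. alph W 1 * rh W 1 * vel W 1) Wm Wp = S * jump (\<lambda>W. alph W 1 * rh W 1) Wm Wp"
    and RH3: "jump (\<lambda>W. rho W * umix W) Wm Wp = S * jump rho Wm Wp"
    and RH4: "jump (\<lambda>W. alph W 1 * rh W 1 * vel W 1 ^ 2 + alph W 2 * rh W 2 * vel W 2 ^ 2
                        + alph W 1 * p 1 (rh W 1) + alph W 2 * p 2 (rh W 2)) Wm Wp
              = S * jump (\<lambda>W. alph W 1 * rh W 1 * vel W 1 + alph W 2 * rh W 2 * vel W 2) Wm Wp"
    and RH5: "jump (\<lambda>W. (vel W 1 ^ 2 - vel W 2 ^ 2) / 2 + Psi p \<phi> 1 (rh W 1) - Psi p \<phi> 2 (rh W 2)) Wm Wp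
              = S * jump (\<lambda>W. vel W 1 - vel W 2) Wm Wp"
    and i: "i \<in> {1, 2}"
  shows "dissip p \<phi> S Wm Wp = rho Wm * (umix Wm - S) * jump (\<lambda>W. bernoulli p \<phi> S W i) Wm Wp"
proof -
  have flux: "mass_flux S Wp j = mass_flux S Wm j" if "j \<in> {1, 2}" for j
    by (rule mass_flux_eq_across_shock[OF RH2 RH3 rho that])
  have "dissip p \<phi> S Wm Wp
      = mass_flux S Wm 1 * jump (\<lambda>W. bernoulli p \<phi> S W 1) Wm Wp
        + mass_flux S Wm 2 * jump (\<lambda>W. bernoulli p \<phi> S W 2) Wm Wp"
    using dissip_eq_mass_flux_bernoulli[OF rh flux RH4] by simp
  also have "\<dots> = (mass_flux S Wm 1 + mass_flux S Wm 2) * jump (\<lambda>W. bernoulli p \<phi> S W i) Wm Wp"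
    using bernoulli_jump_eq_across_phases[OF RH5] i by (auto simp: algebra_simps)
  also have "\<dots> = rho Wm * (umix Wm - S) * jump (\<lambda>W. bernoulli p \<phi> S W i) Wm Wp"
    by (simp add: mixture_flux_eq_sum_mass_flux rho)
  finally show ?thesis .
qed

lemma bernoulli_eq_relative_bernoulli:
  assumes "rh W i \<noteq> 0"
  shows "bernoulli p \<phi> S W i
    = \<phi> i (rh W i) + p i (rh W i) / rh W i + (rh W i * (vel W i - S))\<^sup>2 / (2 * (rh W i)\<^sup>2)"
  using assms by (simp add: bernoulli_def Psi_def power_mult_distrib)

(* p' is needed because sqrt is odd on negative arguments: sound p i r squares to deriv (p i) r only where the latter is nonnegative. *)
lemma bernoulli_jump_neg_if_sonic_behind:
  assumes dP: "\<And>r. r > 0 \<Longrightarrow> (p i has_real_derivative deriv (p i) r) (at r)"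
    and dF: "\<And>r. r > 0 \<Longrightarrow> (\<phi> i has_real_derivative p i r / r\<^sup>2) (at r)"
    and mono: "strict_mono_on {0<..} (\<lambda>r. r\<^sup>2 * deriv (p i) r)"
    and flux: "rh Wm i * (vel Wm i - S) = rh Wp i * (vel Wp i - S)"
    and rh: "0 < rh Wm i" "rh Wm i < rh Wp i"
    and sonic: "S = vel Wp i - sound p i (rh Wp i)"
    and p': "deriv (p i) (rh Wp i) \<ge> 0"
  shows "jump (\<lambda>W. bernoulli p \<phi> S W i) Wm Wp < 0"
proof -
  define K where "K = (rh Wp i * (vel Wp i - S))\<^sup>2"
  have K_sonic: "K = (rh Wp i)\<^sup>2 * deriv (p i) (rh Wp i)"
    using p' by (simp add: K_def sonic sound_def power_mult_distrib)
  have "\<phi> i (rh Wp i) + p i (rh Wp i) / rh Wp i + K / (2 * (rh Wp i)\<^sup>2)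
      < \<phi> i (rh Wm i) + p i (rh Wm i) / rh Wm i + K / (2 * (rh Wm i)\<^sup>2)"
    using relative_bernoulli_strict_decreasing[OF dP dF mono rh, of K] K_sonic by simp
  then show ?thesis
    using rh by (simp add: jump_def bernoulli_eq_relative_bernoulli K_def flux)
qed

lemma bernoulli_jump_pos_if_sonic_ahead:
  assumes dP: "\<And>r. r > 0 \<Longrightarrow> (p i has_real_derivative deriv (p i) r) (at r)"
    and dF: "\<And>r. r > 0 \<Longrightarrow> (\<phi> i has_real_derivative p i r / r\<^sup>2) (at r)"
    and mono: "strict_mono_on {0<..} (\<lambda>r. r\<^sup>2 * deriv (p i) r)"
    and flux: "rh Wm i * (vel Wm i - S) = rh Wp i * (vel Wp i - S)"
    and rh: "0 < rh Wm i" "rh Wm i < rh Wp i"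
    and sonic: "S = vel Wm i - sound p i (rh Wm i)"
    and p': "deriv (p i) (rh Wm i) \<ge> 0"
  shows "jump (\<lambda>W. bernoulli p \<phi> S W i) Wm Wp > 0"
proof -
  define K where "K = (rh Wm i * (vel Wm i - S))\<^sup>2"
  have K_sonic: "K = (rh Wm i)\<^sup>2 * deriv (p i) (rh Wm i)"
    using p' by (simp add: K_def sonic sound_def power_mult_distrib)
  have "\<phi> i (rh Wm i) + p i (rh Wm i) / rh Wm i + K / (2 * (rh Wm i)\<^sup>2)
      < \<phi> i (rh Wp i) + p i (rh Wp i) / rh Wp i + K / (2 * (rh Wp i)\<^sup>2)"
    using relative_bernoulli_strict_increasing[OF dP dF mono rh, of K] K_sonic by simp
  then show ?thesis
    using rh by (simp add: jump_def bernoulli_eq_relative_bernoulli K_def flux)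
qed

theorem mainTheorem4:
  fixes p \<phi> :: "nat \<Rightarrow> real \<Rightarrow> real" and Wm Wp :: state and S :: real and \<nu> :: nat
  assumes p_smooth: "\<And>i. i \<in> {1,2} \<Longrightarrow> smooth_on {0<..} (p i)"
    and p_incr: "\<And>i r. i \<in> {1,2} \<Longrightarrow> r > 0 \<Longrightarrow> deriv (p i) r > 0"
    and phi_anti: "\<And>i r. i \<in> {1,2} \<Longrightarrow> r > 0 \<Longrightarrow>
                      (\<phi> i has_real_derivative p i r / r ^ 2) (at r)"
    and alpha_m: "0 < alph Wm 1" "alph Wm 1 < 1"
    and alpha_p: "0 < alph Wp 1" "alph Wp 1 < 1"
    and rho_m: "rh Wm 1 > 0" "rh Wm 2 > 0"
    and rho_p: "rh Wp 1 > 0" "rh Wp 2 > 0"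
    and RH1: "jump (\<lambda>W. alph W 1 * rho W * umix W) Wm Wp = S * jump (\<lambda>W. alph W 1 * rho W) Wm Wp"
    and RH2: "jump (\<lambda>W. alph W 1 * rh W 1 * vel W 1) Wm Wp = S * jump (\<lambda>W. alph W 1 * rh W 1) Wm Wp"
    and RH3: "jump (\<lambda>W. rho W * umix W) Wm Wp = S * jump rho Wm Wp"
    and RH4: "jump (\<lambda>W. alph W 1 * rh W 1 * vel W 1 ^ 2 + alph W 2 * rh W 2 * vel W 2 ^ 2
                        + alph W 1 * p 1 (rh W 1) + alph W 2 * p 2 (rh W 2)) Wm Wp
              = S * jump (\<lambda>W. alph W 1 * rh W 1 * vel W 1 + alph W 2 * rh W 2 * vel W 2) Wm Wp"
    and RH5: "jump (\<lambda>W. (vel W 1 ^ 2 - vel W 2 ^ 2) / 2 + Psi p \<phi> 1 (rh W 1) - Psi p \<phi> 2 (rh W 2)) Wm Wp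
              = S * jump (\<lambda>W. vel W 1 - vel W 2) Wm Wp"
    and Qneg: "- rho Wm * (umix Wm - S) < 0"
    and nu: "\<nu> \<in> {1,2}"
    and mono: "strict_mono_on {0<..} (\<lambda>r. r * sound p \<nu> r)"
    and rho_nu: "rh Wm \<nu> < rh Wp \<nu>"
  shows "(S = vel Wp \<nu> - sound p \<nu> (rh Wp \<nu>) \<longrightarrow> dissip p \<phi> S Wm Wp < 0)
       \<and> (S = vel Wm \<nu> - sound p \<nu> (rh Wm \<nu>) \<longrightarrow> dissip p \<phi> S Wm Wp > 0)"
proof -
  define M where "M = rho Wm * (umix Wm - S)"
  have M_pos: "M > 0"
    using Qneg by (simp add: M_def)
  have rho_ne: "rho Wm \<noteq> 0" "rho Wp \<noteq> 0"
    using rho_pos alpha_m alpha_p rho_m rho_p by (metis less_irrefl)+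
  have rh_ne: "rh Wm i \<noteq> 0 \<and> rh Wp i \<noteq> 0" if "i \<in> {1, 2}" for i
    using that rho_m rho_p by auto
  have dissip_eq: "dissip p \<phi> S Wm Wp = M * jump (\<lambda>W. bernoulli p \<phi> S W \<nu>) Wm Wp"
    unfolding M_def by (rule dissip_eq_mixture_flux_mul_bernoulli_jump[OF rh_ne rho_ne RH2 RH3 RH4 RH5 nu])
  have "alph Wm \<nu> \<noteq> 0"
    using nu alpha_m by (auto simp: alph_2)
  with M_pos have phase_flux: "rh Wm \<nu> * (vel Wm \<nu> - S) = rh Wp \<nu> * (vel Wp \<nu> - S)"
    unfolding M_def by (intro phase_flux_eq_across_shock[OF RH1 RH2 RH3 rho_ne _ _ nu]) auto
  have dp: "\<And>r. r > 0 \<Longrightarrow> (p \<nu> has_real_derivative deriv (p \<nu>) r) (at r)"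
    using has_real_derivative_if_smooth_on p_smooth nu by blast
  have mono2: "strict_mono_on {0<..} (\<lambda>r. r\<^sup>2 * deriv (p \<nu>) r)"
    using mono p_incr[OF nu] by (rule strict_mono_on_power2_mul_deriv)
  have rh_nu: "0 < rh Wm \<nu>" "rh Wm \<nu> < rh Wp \<nu>"
    using nu rho_m rho_nu by auto
  then have p'_nu: "0 \<le> deriv (p \<nu>) (rh Wm \<nu>)" "0 \<le> deriv (p \<nu>) (rh Wp \<nu>)"
    using p_incr[OF nu] by (simp_all add: less_imp_le)
  note phase = dp phi_anti[OF nu] mono2 phase_flux rh_nu
  show ?thesis
    unfolding dissip_eq
    using bernoulli_jump_neg_if_sonic_behind[where p = p and \<phi> = \<phi> and i = \<nu>, OF phase _ p'_nu(2)]
      bernoulli_jump_pos_if_sonic_ahead[where p = p and \<phi> = \<phi> and i = \<nu>, OF phase _ p'_nu(1)]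
      M_pos
    by (meson mult_pos_neg mult_pos_pos)
qed

end
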